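(* For all $p,q\in[1,\infty)$, $$\min\Big\{\inf_{a\in[0,\widehat a]}S_{p,q}(a),\ \inf_{a\in[\widehat a,1)}A_{p,q}(a)\Big\}\ \le\ R_{p,q}(\mathbb C)\ \le\ \min\Big\{\frac1{\sqrt2},\ \inf_{a\in[\widehat a,1)}A_{p,q}(a)\Big\}.$$
   Context: For $a\in[0,1)$: $A_{p,q}(a)=\frac{(1-a^p)^{1/q}}{1-a^2+a(1-a^p)^{1/q}}$, $S_{p,q}(a)=\big(\frac{(1-a^p)^{2/q}}{1-a^2+(1-a^p)^{2/q}}\big)^{1/2}$, and $\widehat a$ is the unique root in $(0,1)$ of $x^p+x^q=1$. For a holomorphic $f(z)=\sum_{k\ge0}a_kz^k$ from $\mathbb D$ into the closed unit disk, $R_{p,q}(f,\mathbb C)=\sup\{r\ge0: |a_0|^p+(\sum_{k\ge1}|a_k|r^k)^q\le1\}$ and $R_{p,q}(\mathbb C)$ is the infimum of $R_{p,q}(f,\mathbb C)$ over all such $f$. *)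

theory Defs
  imports "HOL-Complex_Analysis.Complex_Analysis" "HOL-Library.Extended_Real"
begin

definition A_pq :: "real \<Rightarrow> real \<Rightarrow> real \<Rightarrow> real" where
  "A_pq p q a = (1 - a powr p) powr (1/q) / (1 - a^2 + a * (1 - a powr p) powr (1/q))"

definition S_pq :: "real \<Rightarrow> real \<Rightarrow> real \<Rightarrow> real" where
  "S_pq p q a = sqrt ((1 - a powr p) powr (2/q) / (1 - a^2 + (1 - a powr p) powr (2/q)))"

definition ahat :: "real \<Rightarrow> real \<Rightarrow> real" where
  "ahat p q = (THE x. 0 < x \<and> x < 1 \<and> x powr p + x powr q = 1)"

definition taylor_coeff :: "(complex \<Rightarrow> complex) \<Rightarrow> nat \<Rightarrow> complex" where
  "taylor_coeff f k = (deriv ^^ k) f 0 / of_nat (fact k)"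

text \<open>admissible radii: the series of |a_k| r^k (k>=1) converges and the inequality holds
  (a divergent series counts as +infinity, so the inequality fails)\<close>
definition Rpq_ok :: "real \<Rightarrow> real \<Rightarrow> (complex \<Rightarrow> complex) \<Rightarrow> real \<Rightarrow> bool" where
  "Rpq_ok p q f r \<longleftrightarrow> 0 \<le> r \<and>
     summable (\<lambda>k. cmod (taylor_coeff f (Suc k)) * r ^ Suc k) \<and>
     cmod (taylor_coeff f 0) powr p
       + (\<Sum>k. cmod (taylor_coeff f (Suc k)) * r ^ Suc k) powr q \<le> 1"

definition Rpq_f :: "real \<Rightarrow> real \<Rightarrow> (complex \<Rightarrow> complex) \<Rightarrow> ereal" where
  "Rpq_f p q f = (SUP r\<in>{r. Rpq_ok p q f r}. ereal r)"

definition Rpq_C :: "real \<Rightarrow> real \<Rightarrow> ereal" where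
  "Rpq_C p q = (INF f\<in>{f. f holomorphic_on ball 0 1 \<and> (\<forall>z\<in>ball 0 1. cmod (f z) \<le> 1)}.
      Rpq_f p q f)"

end

theory Submission
  imports Defs
begin

text \<open>
  Write \<open>a = |f 0|\<close> and \<open>M(r) = \<Sum>k\<ge>1. |a_k| r^k\<close>. Parseval's identity on the circles
  \<open>|z| = \<rho>\<close>, together with the Schwarz--Pick inequality \<open>|f z - f 0| \<le> |z| |1 - f(0)\<^sup>* f z|\<close>,
  controls the weighted square sums \<open>\<Sum>k\<ge>1. (|a_k| \<rho>^k)^2\<close>; the AM-GM (Cauchy--Schwarz)
  inequality then gives \<open>M(r) \<le> r (1 - a^2) / (1 - a r)\<close> for \<open>r < a\<close> and
  \<open>M(r) \<le> r sqrt (1 - a^2) / sqrt (1 - r^2)\<close> for all \<open>r < 1\<close>. Demanding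
  \<open>M(r) \<le> (1 - a^p)^(1/q)\<close> turns these into \<open>r \<le> A_pq(a)\<close>, available when
  \<open>(1 - a^p)^(1/q) < a\<close>, i.e. \<open>a > ahat\<close>, and \<open>r \<le> S_pq(a)\<close>. Conversely the Moebius maps
  \<open>(z - a) / (1 - a z)\<close> have majorant exactly \<open>(1 - a^2) r / (1 - a r)\<close>, which reaches the
  admissible maximum at \<open>r = A_pq(a)\<close>, and \<open>z (z - s) / (1 - s z)\<close> with \<open>s = 1/sqrt 2\<close> has
  majorant exactly 1 at \<open>r = s\<close>; since the majorant is strictly increasing, no larger radius works.
\<close>

lemma taylor_coeff_0 [simp]: "taylor_coeff f 0 = f 0"
  by (simp add: taylor_coeff_def)

lemma taylor_coeff_unique:
  fixes b :: "nat \<Rightarrow> complex"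
  assumes "\<And>z. norm z < 1 \<Longrightarrow> (\<lambda>k. b k * z ^ k) sums f z"
  shows "taylor_coeff f k = b k"
proof -
  define F where "F = Abs_fps b"
  have "fps_conv_radius F \<ge> 1"
    unfolding fps_conv_radius_def F_def fps_nth_Abs_fps
  proof (rule conv_radius_geI_ex')
    fix r :: real assume "0 < r" "ereal r < 1"
    then have "norm (of_real r :: complex) < 1" by auto
    from sums_summable[OF assms[OF this]] show "summable (\<lambda>n. b n * of_real r ^ n)" .
  qed
  then have pos: "fps_conv_radius F > 0"
    by (metis less_le_trans zero_less_one ereal_less(2) one_ereal_def)
  have "eventually (\<lambda>z. eval_fps F z = f z) (nhds 0)"
  proof -
    have "eventually (\<lambda>z::complex. z \<in> ball 0 1) (nhds 0)"
      by (intro eventually_nhds_in_open) auto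
    then show ?thesis
    proof eventually_elim
      case (elim z)
      then show ?case
        unfolding eval_fps_def F_def fps_nth_Abs_fps using assms sums_unique by (metis mem_ball_0)
    qed
  qed
  then have "(deriv ^^ k) (eval_fps F) 0 = (deriv ^^ k) f 0"
    by (intro higher_deriv_cong_ev refl)
  then show ?thesis
    using fps_nth_conv_deriv[OF pos, of k] by (simp add: F_def taylor_coeff_def)
qed

lemma taylor_sums:
  assumes "f holomorphic_on ball 0 1" "norm z < 1"
  shows "(\<lambda>k. taylor_coeff f k * z ^ k) sums f z"
  using holomorphic_power_series[OF assms(1), of z] assms(2)
  by (simp add: taylor_coeff_def)

lemma taylor_coeff_affine:
  assumes "f holomorphic_on ball 0 1"
  shows "taylor_coeff (\<lambda>z. \<alpha> + \<beta> * f z) k = (if k = 0 then \<alpha> else 0) + \<beta> * taylor_coeff f k"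
proof (rule taylor_coeff_unique)
  fix z :: complex assume "norm z < 1"
  then have "(\<lambda>k. (if k = 0 then \<alpha> else 0) + \<beta> * (taylor_coeff f k * z ^ k)) sums (\<alpha> + \<beta> * f z)"
    by (intro sums_add sums_mult taylor_sums assms) (use sums_single[of 0 "\<lambda>_. \<alpha>"] in simp)
  moreover have "(\<lambda>k. (if k = 0 then \<alpha> else 0) + \<beta> * (taylor_coeff f k * z ^ k))
      = (\<lambda>k. ((if k = 0 then \<alpha> else 0) + \<beta> * taylor_coeff f k) * z ^ k)"
    by (auto simp: algebra_simps)
  ultimately show "(\<lambda>k. ((if k = 0 then \<alpha> else 0) + \<beta> * taylor_coeff f k) * z ^ k) sums (\<alpha> + \<beta> * f z)"
    by simp
qed

lemma taylor_coeff_mult_id: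
  assumes "f holomorphic_on ball 0 1"
  shows "taylor_coeff (\<lambda>z. z * f z) (Suc k) = taylor_coeff f k"
proof -
  have "taylor_coeff (\<lambda>z. z * f z) n = (if n = 0 then 0 else taylor_coeff f (n - 1))" for n
  proof (rule taylor_coeff_unique)
    fix z :: complex assume "norm z < 1"
    then have "(\<lambda>k. z * (taylor_coeff f k * z ^ k)) sums (z * f z)"
      by (intro sums_mult taylor_sums assms)
    then show "(\<lambda>n. (if n = 0 then 0 else taylor_coeff f (n - 1)) * z ^ n) sums (z * f z)"
      using sums_Suc_iff[of "\<lambda>n. (if n = 0 then 0 else taylor_coeff f (n - 1)) * z ^ n" "z * f z"]
      by (simp add: algebra_simps)
  qed
  then show ?thesis by simp
qed

lemma summable_norm_taylor_coeff:
  assumes "f holomorphic_on ball 0 1" "0 \<le> r" "r < 1"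
  shows "summable (\<lambda>k. cmod (taylor_coeff f k) * r ^ k)"
proof -
  define R where "R = (1 + r) / 2"
  have R: "r < R" "R < 1" using assms by (auto simp: R_def)
  have "summable (\<lambda>k. taylor_coeff f k * complex_of_real R ^ k)"
    using taylor_sums[OF assms(1), of "of_real R"] R assms sums_summable by auto
  from powser_insidea[OF this, of "of_real r"] R assms
  show ?thesis by (simp add: norm_mult norm_power)
qed

lemma cis_power_orthogonal:
  fixes k l :: nat
  shows "((\<lambda>\<theta>. cis \<theta> ^ k * cnj (cis \<theta> ^ l)) has_integral (if k = l then 2*pi else 0)) {0..2*pi}"
proof (cases "k = l")
  case True
  have "cis \<theta> ^ k * cnj (cis \<theta> ^ l) = 1" for \<theta>
    using True by (simp add: cis_cnj cis_mult flip: power_mult_distrib)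
  then show ?thesis using True has_integral_const_real[of "1::complex" 0 "2*pi"]
    by (simp add: scaleR_conv_of_real)
next
  case False
  define a where "a = \<i> * (of_int (int k - int l) :: complex)"
  have a0: "a \<noteq> 0" using False by (simp add: a_def)
  have eq: "cis \<theta> ^ k * cnj (cis \<theta> ^ l) = exp (a * complex_of_real \<theta>)" for \<theta>
  proof -
    have "cis \<theta> ^ k * cnj (cis \<theta> ^ l) = cis (real k * \<theta> + - (real l * \<theta>))"
      by (simp only: DeMoivre complex_cnj_power cis_cnj Complex.DeMoivre cis_mult mult_minus_right)
    also have "\<dots> = exp (a * complex_of_real \<theta>)"
      by (simp add: cis_conv_exp a_def algebra_simps)
    finally show ?thesis .
  qed
  have "a * complex_of_real (2*pi) = (2 * of_int (int k - int l) * pi) * \<i>"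
    by (simp add: a_def algebra_simps)
  then have "exp (a * complex_of_real (2*pi)) = 1"
    by (metis exp_integer_2pi Ints_of_int)
  then have "integral {0..2*pi} (\<lambda>t. exp (a * complex_of_real t)) = 0"
    using integral_exp[of "2*pi" a] a0 by simp
  moreover have "(\<lambda>t. exp (a * complex_of_real t)) integrable_on {0..2*pi}"
    by (intro integrable_continuous_interval continuous_intros)
  ultimately show ?thesis using False eq integrable_integral by fastforce
qed

lemma integral_norm_sq_trig_poly:
  fixes b :: "nat \<Rightarrow> complex"
  shows "((\<lambda>\<theta>. (norm (\<Sum>k<n. b k * cis \<theta> ^ k))^2) has_integral 2*pi * (\<Sum>k<n. (norm (b k))^2)) {0..2*pi}"
proof -
  have eq: "complex_of_real ((norm (\<Sum>k<n. b k * cis \<theta> ^ k))^2) =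
      (\<Sum>k<n. \<Sum>l<n. b k * cnj (b l) * (cis \<theta> ^ k * cnj (cis \<theta> ^ l)))" for \<theta>
    unfolding complex_norm_square
    by (simp add: sum_distrib_left sum_distrib_right algebra_simps) (rule sum.swap)
  have "((\<lambda>\<theta>. \<Sum>k<n. \<Sum>l<n. b k * cnj (b l) * (cis \<theta> ^ k * cnj (cis \<theta> ^ l))) has_integral
      (\<Sum>k<n. \<Sum>l<n. b k * cnj (b l) * (if k = l then 2*pi else 0))) {0..2*pi}"
    by (intro has_integral_sum finite_lessThan has_integral_mult_right cis_power_orthogonal)
  also have "(\<Sum>k<n. \<Sum>l<n. b k * cnj (b l) * (if k = l then 2*pi else 0)) =
      (\<Sum>k<n. b k * cnj (b k) * (2*pi))"
    by (simp add: if_distrib cong: if_cong)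
  also have "\<dots> = complex_of_real (2*pi * (\<Sum>k<n. (norm (b k))^2))"
    unfolding of_real_mult of_real_sum sum_distrib_left complex_norm_square by (simp add: mult_ac)
  finally have "((\<lambda>\<theta>. complex_of_real ((norm (\<Sum>k<n. b k * cis \<theta> ^ k))^2)) has_integral
      complex_of_real (2*pi * (\<Sum>k<n. (norm (b k))^2))) {0..2*pi}"
    by (simp only: eq)
  from has_integral_linear[OF this bounded_linear_Re] show ?thesis by (simp add: o_def)
qed

lemma parseval:
  fixes b :: "nat \<Rightarrow> complex"
  assumes sb: "summable (\<lambda>k. norm (b k))"
  shows "summable (\<lambda>k. (norm (b k))^2)"
    and "((\<lambda>\<theta>. (norm (\<Sum>k. b k * cis \<theta> ^ k))^2) has_integral 2*pi * (\<Sum>k. (norm (b k))^2)) {0..2*pi}"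
proof -
  define P where "P n \<theta> = (\<Sum>k<n. b k * cis \<theta> ^ k)" for n \<theta>
  define g where "g \<theta> = (\<Sum>k. b k * cis \<theta> ^ k)" for \<theta>
  have unif: "uniform_limit {0..2*pi} P g sequentially"
    unfolding P_def g_def by (rule Weierstrass_m_test[OF _ sb]) (simp add: norm_mult norm_power)
  have "norm (g \<theta>) \<le> (\<Sum>k. norm (b k))" for \<theta>
    unfolding g_def by (intro norm_suminf_le sb) (simp add: norm_mult norm_power)
  then have bdd: "bounded ((\<lambda>\<theta>. norm (g \<theta>)) ` {0..2*pi})"
    by (intro boundedI[of _ "\<Sum>k. norm (b k)"]) auto
  have "uniform_limit {0..2*pi} (\<lambda>n \<theta>. norm (P n \<theta>) * norm (P n \<theta>)) (\<lambda>\<theta>. norm (g \<theta>) * norm (g \<theta>)) sequentially"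
    by (intro uniform_lim_mult uniform_limit_norm unif bdd)
  then have "uniform_limit {0..2*pi} (\<lambda>n \<theta>. (norm (P n \<theta>))^2) (\<lambda>\<theta>. (norm (g \<theta>))^2) sequentially"
    by (simp add: power2_eq_square)
  then obtain I J where I: "\<And>n. ((\<lambda>\<theta>. (norm (P n \<theta>))^2) has_integral I n) {0..2*pi}"
    and J: "((\<lambda>\<theta>. (norm (g \<theta>))^2) has_integral J) {0..2*pi}" and lim: "I \<longlonglongrightarrow> J"
    by (rule uniform_limit_integral) (auto simp: P_def intro!: continuous_intros)
  have "I n = 2*pi * (\<Sum>k<n. (norm (b k))^2)" for n
    using has_integral_unique[OF I integral_norm_sq_trig_poly[of b n, folded P_def]] .
  with lim have "(\<lambda>n. (\<Sum>k<n. (norm (b k))^2)) \<longlonglongrightarrow> J / (2*pi)"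
    using tendsto_divide[OF lim tendsto_const[of "2*pi"]] by simp
  then have sums: "(\<lambda>k. (norm (b k))^2) sums (J / (2*pi))"
    by (simp add: sums_def)
  then show "summable (\<lambda>k. (norm (b k))^2)"
    by (rule sums_summable)
  show "((\<lambda>\<theta>. (norm (\<Sum>k. b k * cis \<theta> ^ k))^2) has_integral 2*pi * (\<Sum>k. (norm (b k))^2)) {0..2*pi}"
    using J sums_unique[OF sums] by (simp add: g_def field_simps)
qed

definition tail_majorant :: "(complex \<Rightarrow> complex) \<Rightarrow> real \<Rightarrow> real" where
  "tail_majorant f r = (\<Sum>k. cmod (taylor_coeff f (Suc k)) * r ^ Suc k)"

definition tail_sq_sum :: "(complex \<Rightarrow> complex) \<Rightarrow> real \<Rightarrow> real" where
  "tail_sq_sum f r = (\<Sum>k. (cmod (taylor_coeff f (Suc k)) * r ^ Suc k)^2)"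

lemma tail_majorant_0 [simp]: "tail_majorant f 0 = 0"
  by (simp add: tail_majorant_def)

lemma circle_integral_norm_sq:
  assumes holg: "g holomorphic_on ball 0 1" and \<rho>: "0 \<le> \<rho>" "\<rho> < 1"
  shows "summable (\<lambda>k. (cmod (taylor_coeff g (Suc k)) * \<rho> ^ Suc k)^2)"
    and "((\<lambda>\<theta>. (cmod (g (of_real \<rho> * cis \<theta>)))^2) has_integral
           2*pi * ((cmod (g 0))^2 + tail_sq_sum g \<rho>)) {0..2*pi}"
proof -
  define b where "b k = taylor_coeff g k * of_real \<rho> ^ k" for k
  have nb: "norm (b k) = cmod (taylor_coeff g k) * \<rho> ^ k" for k
    using \<rho> by (simp add: b_def norm_mult norm_power)
  have "summable (\<lambda>k. norm (b k))"
    unfolding nb by (rule summable_norm_taylor_coeff[OF holg \<rho>])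
  note P = parseval[OF this]
  have "g (of_real \<rho> * cis \<theta>) = (\<Sum>k. b k * cis \<theta> ^ k)" for \<theta>
    using taylor_sums[OF holg, of "of_real \<rho> * cis \<theta>"] \<rho>
    by (simp add: b_def norm_mult power_mult_distrib mult.assoc sums_iff)
  moreover have "(\<Sum>k. (norm (b k))^2) = (cmod (g 0))^2 + tail_sq_sum g \<rho>"
    using suminf_split_head[OF P(1)] by (simp add: nb tail_sq_sum_def)
  ultimately show "((\<lambda>\<theta>. (cmod (g (of_real \<rho> * cis \<theta>)))^2) has_integral
           2*pi * ((cmod (g 0))^2 + tail_sq_sum g \<rho>)) {0..2*pi}"
    using P(2) by simp
  show "summable (\<lambda>k. (cmod (taylor_coeff g (Suc k)) * \<rho> ^ Suc k)^2)"
    using P(1) by (subst (asm) summable_Suc_iff[symmetric]) (simp add: nb)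
qed

lemma tail_sq_sum_affine:
  assumes holf: "f holomorphic_on ball 0 1" and \<rho>: "0 \<le> \<rho>" "\<rho> < 1"
  shows "tail_sq_sum (\<lambda>z. \<alpha> + \<beta> * f z) \<rho> = (cmod \<beta>)^2 * tail_sq_sum f \<rho>"
  unfolding tail_sq_sum_def taylor_coeff_affine[OF holf]
  using suminf_mult[OF circle_integral_norm_sq(1)[OF holf \<rho>], of "(cmod \<beta>)^2"]
  by (simp add: norm_mult power_mult_distrib mult_ac)

lemma norm_diff_le_norm_one_minus_cnj_mult:
  fixes \<alpha> w :: complex
  assumes "norm w \<le> 1" "norm \<alpha> \<le> 1"
  shows "norm (w - \<alpha>) \<le> norm (1 - cnj \<alpha> * w)"
proof -
  have "(norm (1 - cnj \<alpha> * w))^2 - (norm (w - \<alpha>))^2 = (1 - (norm \<alpha>)^2) * (1 - (norm w)^2)"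
    by (simp only: cmod_power2) (simp add: algebra_simps power2_eq_square)
  moreover have "(1 - (norm \<alpha>)^2) * (1 - (norm w)^2) \<ge> 0"
    using assms by (intro mult_nonneg_nonneg) (auto simp: power_le_one)
  ultimately have "(norm (w - \<alpha>))^2 \<le> (norm (1 - cnj \<alpha> * w))^2"
    by linarith
  then show ?thesis
    by (rule power2_le_imp_le) simp
qed

lemma schwarz_pick_at_0:
  assumes holf: "f holomorphic_on ball 0 1" and bnd: "\<forall>z\<in>ball 0 1. cmod (f z) \<le> 1"
    and f0: "cmod (f 0) < 1" and z: "norm z < 1"
  shows "cmod (f z - f 0) \<le> norm z * cmod (1 - cnj (f 0) * f z)"
proof -
  define \<alpha> where "\<alpha> = f 0"
  have den: "1 - cnj \<alpha> * f w \<noteq> 0" if "norm w < 1" for w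
  proof
    assume "1 - cnj \<alpha> * f w = 0"
    then have "1 = norm (cnj \<alpha> * f w)" by (metis eq_iff_diff_eq_0 norm_one)
    also have "\<dots> \<le> norm \<alpha> * 1" unfolding norm_mult complex_mod_cnj
      using bnd that by (intro mult_left_mono) auto
    finally show False using f0 by (simp add: \<alpha>_def)
  qed
  define h where "h w = (f w - \<alpha>) / (1 - cnj \<alpha> * f w)" for w
  have holh: "h holomorphic_on ball 0 1"
    unfolding h_def using den by (intro holomorphic_intros holf) auto
  have hle: "norm (h w) \<le> 1" if "norm w < 1" for w
  proof -
    have "norm (f w - \<alpha>) \<le> norm (1 - cnj \<alpha> * f w)"
      using bnd that f0 by (intro norm_diff_le_norm_one_minus_cnj_mult) (auto simp: \<alpha>_def)
    then show ?thesis using den[OF that] by (simp add: h_def norm_divide divide_le_eq_1)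
  qed
  \<comment> \<open>Schwarz's lemma needs values in the open disc, so it is applied to the contractions \<open>s * h\<close>.\<close>
  have "norm (h z) \<le> norm z"
  proof (rule field_le_mult_one_interval)
    fix s :: real assume s: "0 < s" "s < 1"
    have "norm (of_real s * h z) \<le> norm z"
    proof (rule Schwarz_Lemma(1))
      show "(\<lambda>w. of_real s * h w) holomorphic_on ball 0 1" by (intro holomorphic_intros holh)
      show "of_real s * h 0 = 0" by (simp add: h_def \<alpha>_def)
      show "norm (of_real s * h w) < 1" if "norm w < 1" for w
        using hle[OF that] s by (simp add: norm_mult) (smt (verit) mult_left_le)
    qed (use z in auto)
    then show "s * norm (h z) \<le> norm z" using s by (simp add: norm_mult)
  qed
  then have "norm (h z) * norm (1 - cnj \<alpha> * f z) \<le> norm z * norm (1 - cnj \<alpha> * f z)"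
    by (intro mult_right_mono) auto
  then show ?thesis using den[OF z] by (simp add: h_def norm_divide \<alpha>_def)
qed

lemma tail_sq_sum_le:
  assumes holf: "f holomorphic_on ball 0 1" and bnd: "\<forall>z\<in>ball 0 1. cmod (f z) \<le> 1"
    and \<rho>: "0 \<le> \<rho>" "\<rho> < 1"
  shows "tail_sq_sum f \<rho> \<le> 1 - (cmod (f 0))^2"
proof -
  have "(cmod (f (of_real \<rho> * cis \<theta>)))^2 \<le> 1" for \<theta>
    using bnd \<rho> by (simp add: norm_mult power_le_one)
  then have "2*pi * ((cmod (f 0))^2 + tail_sq_sum f \<rho>) \<le> 1 * (2*pi - 0)"
    using has_integral_le[OF circle_integral_norm_sq(2)[OF holf \<rho>] has_integral_const_real[of 1 0 "2*pi"]]
    by simp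
  then show ?thesis by simp
qed

lemma tail_sq_sum_schwarz:
  assumes holf: "f holomorphic_on ball 0 1" and bnd: "\<forall>z\<in>ball 0 1. cmod (f z) \<le> 1"
    and f0: "cmod (f 0) < 1" and \<rho>: "0 \<le> \<rho>" "\<rho> < 1"
  shows "tail_sq_sum f \<rho> * (1 - (cmod (f 0))^2 * \<rho>^2) \<le> \<rho>^2 * (1 - (cmod (f 0))^2)^2"
proof -
  define a where "a = cmod (f 0)"
  define Y where "Y = tail_sq_sum f \<rho>"
  \<comment> \<open>Both in the shape \<open>\<alpha> + \<beta> * f z\<close> of \<open>tail_sq_sum_affine\<close>.\<close>
  define g1 where "g1 = (\<lambda>z. - f 0 + 1 * f z)"
  define g2 where "g2 = (\<lambda>z. 1 + - cnj (f 0) * f z)"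
  have "g1 holomorphic_on ball 0 1" "g2 holomorphic_on ball 0 1"
    unfolding g1_def g2_def by (intro holomorphic_intros holf)+
  note I1 = circle_integral_norm_sq(2)[OF this(1) \<rho>] and I2 = circle_integral_norm_sq(2)[OF this(2) \<rho>]
  have "cnj (f 0) * f 0 = of_real (a^2)"
    unfolding a_def complex_norm_square by (rule mult.commute)
  then have "g2 0 = of_real (1 - a^2)"
    by (simp add: g2_def)
  then have "cmod (g2 0) = \<bar>1 - a^2\<bar>"
    by (simp only: norm_of_real)
  then have g2_0: "cmod (g2 0) = 1 - a^2"
    using f0 by (simp add: a_def power_le_one)
  have g1_0: "g1 0 = 0"
    by (simp add: g1_def)
  have tails: "tail_sq_sum g1 \<rho> = Y" "tail_sq_sum g2 \<rho> = a^2 * Y"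
    using tail_sq_sum_affine[OF holf \<rho>, of "- f 0" 1, folded g1_def]
      tail_sq_sum_affine[OF holf \<rho>, of 1 "- cnj (f 0)", folded g2_def]
    by (simp_all add: Y_def a_def)
  have "(cmod (g1 (of_real \<rho> * cis \<theta>)))^2 \<le> \<rho>^2 * (cmod (g2 (of_real \<rho> * cis \<theta>)))^2" for \<theta>
  proof -
    have "cmod (g1 (of_real \<rho> * cis \<theta>)) \<le> \<rho> * cmod (g2 (of_real \<rho> * cis \<theta>))"
      using schwarz_pick_at_0[OF holf bnd f0, of "of_real \<rho> * cis \<theta>"] \<rho>
      by (simp add: g1_def g2_def norm_mult)
    then show ?thesis by (metis norm_ge_zero power_mono power_mult_distrib)
  qed
  then have "2*pi * Y \<le> \<rho>^2 * (2*pi * ((1 - a^2)^2 + a^2 * Y))"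
    using has_integral_le[OF I1 has_integral_mult_right[OF I2, of "\<rho>^2"]]
    by (simp add: g1_0 tails g2_0)
  then have "(2*pi) * Y \<le> (2*pi) * (\<rho>^2 * ((1 - a^2)^2 + a^2 * Y))"
    by (simp add: algebra_simps)
  then have "Y \<le> \<rho>^2 * ((1 - a^2)^2 + a^2 * Y)"
    by (rule mult_left_le_imp_le) simp
  then show ?thesis
    by (simp add: a_def Y_def algebra_simps)
qed

lemma sq_taylor_coeff_sums_le:
  assumes holf: "f holomorphic_on ball 0 1" and bnd: "\<forall>z\<in>ball 0 1. cmod (f z) \<le> 1"
  shows "summable (\<lambda>k. (cmod (taylor_coeff f (Suc k)))^2)"
    and "(\<Sum>k. (cmod (taylor_coeff f (Suc k)))^2) \<le> 1 - (cmod (f 0))^2"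
proof -
  define c where "c k = cmod (taylor_coeff f (Suc k))" for k
  have partial: "(\<Sum>k<n. (c k)^2) \<le> 1 - (cmod (f 0))^2" for n
  proof (rule tendsto_le[OF trivial_limit_at_left_real])
    show "((\<lambda>\<rho>. \<Sum>k<n. (c k * \<rho> ^ Suc k)^2) \<longlongrightarrow> (\<Sum>k<n. (c k)^2)) (at_left 1)"
      by (rule tendsto_eq_intros refl | simp)+
    have "(\<Sum>k<n. (c k * \<rho> ^ Suc k)^2) \<le> 1 - (cmod (f 0))^2" if "\<rho> \<in> {0<..<1}" for \<rho>
    proof -
      have "(\<Sum>k<n. (c k * \<rho> ^ Suc k)^2) \<le> tail_sq_sum f \<rho>"
        unfolding tail_sq_sum_def c_def using that
        by (intro sum_le_suminf circle_integral_norm_sq(1)[OF holf]) auto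
      also have "\<dots> \<le> 1 - (cmod (f 0))^2"
        using that by (intro tail_sq_sum_le[OF holf bnd]) auto
      finally show ?thesis .
    qed
    then show "eventually (\<lambda>\<rho>. (\<Sum>k<n. (c k * \<rho> ^ Suc k)^2) \<le> 1 - (cmod (f 0))^2) (at_left 1)"
      using eventually_at_left_real[of 0 "1::real"] by (auto elim: eventually_mono)
  qed simp
  show sm: "summable (\<lambda>k. (cmod (taylor_coeff f (Suc k)))^2)"
    using partial by (intro summableI_nonneg_bounded[where x = "1 - (cmod (f 0))^2"]) (auto simp: c_def)
  show "(\<Sum>k. (cmod (taylor_coeff f (Suc k)))^2) \<le> 1 - (cmod (f 0))^2"
    using partial by (intro suminf_le_const sm) (simp add: c_def)
qed

lemma taylor_coeff_Suc_eq_0_if_norm_eq_1: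
  assumes holf: "f holomorphic_on ball 0 1" and bnd: "\<forall>z\<in>ball 0 1. cmod (f z) \<le> 1"
    and f0: "cmod (f 0) = 1"
  shows "taylor_coeff f (Suc k) = 0"
proof -
  note sq = sq_taylor_coeff_sums_le[OF holf bnd]
  have "(\<Sum>k. (cmod (taylor_coeff f (Suc k)))^2) = 0"
    using sq(2) f0 suminf_nonneg[OF sq(1)] by (simp add: antisym)
  then show ?thesis
    using suminf_eq_zero_iff[OF sq(1)] by simp
qed

lemma geometric_sums_Suc:
  fixes x :: real
  assumes "0 \<le> x" "x < 1"
  shows "(\<lambda>k. x ^ Suc k) sums (x / (1 - x))"
  using sums_mult[OF geometric_sums[of x], of x] assms by simp

lemma suminf_mult_le_amgm:
  fixes u v :: "nat \<Rightarrow> real"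
  assumes u: "\<And>k. 0 \<le> u k" and v: "\<And>k. 0 \<le> v k"
    and su: "summable (\<lambda>k. (u k)^2)" and sv: "summable (\<lambda>k. (v k)^2)" and l: "0 < l"
  shows "(\<Sum>k. u k * v k) \<le> (l * (\<Sum>k. (u k)^2) + (\<Sum>k. (v k)^2) / l) / 2"
proof -
  have pt: "u k * v k \<le> (l * (u k)^2 + (v k)^2 / l) / 2" for k
  proof -
    have "0 \<le> (l * u k - v k)^2 / l" using l by simp
    also have "\<dots> = l * (u k)^2 + (v k)^2 / l - 2 * (u k * v k)"
      using l by (simp add: power2_eq_square field_simps)
    finally show ?thesis by simp
  qed
  have s2: "summable (\<lambda>k. (l * (u k)^2 + (v k)^2 / l) / 2)"
    by (intro summable_divide summable_add summable_mult su sv)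
  have "summable (\<lambda>k. u k * v k)"
    by (rule summable_comparison_test[OF _ s2]) (use pt u v in auto)
  then have "(\<Sum>k. u k * v k) \<le> (\<Sum>k. (l * (u k)^2 + (v k)^2 / l) / 2)"
    by (intro suminf_le pt s2)
  also have "\<dots> = (l * (\<Sum>k. (u k)^2) + (\<Sum>k. (v k)^2) / l) / 2"
    by (intro sums_unique[symmetric] sums_divide sums_add sums_mult summable_sums su sv)
  finally show ?thesis .
qed

lemma summable_tail_majorant:
  assumes "f holomorphic_on ball 0 1" "0 \<le> r" "r < 1"
  shows "summable (\<lambda>k. cmod (taylor_coeff f (Suc k)) * r ^ Suc k)"
  using summable_norm_taylor_coeff[OF assms] by (subst summable_Suc_iff)

lemma tail_majorant_nonneg:
  assumes "summable (\<lambda>k. cmod (taylor_coeff f (Suc k)) * r ^ Suc k)" "0 \<le> r"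
  shows "0 \<le> tail_majorant f r"
  unfolding tail_majorant_def using assms by (intro suminf_nonneg) auto

lemma tail_majorant_le_amgm:
  assumes holf: "f holomorphic_on ball 0 1" and \<rho>: "0 < \<rho>" "\<rho> < 1" and r: "0 \<le> r" "r < \<rho>"
    and l: "0 < l"
  shows "tail_majorant f r \<le> (l * tail_sq_sum f \<rho> + (r / \<rho>)^2 / (1 - (r / \<rho>)^2) / l) / 2"
proof -
  define t where "t = (r / \<rho>)^2"
  have t: "0 \<le> t" "t < 1" using \<rho> r by (auto simp: t_def power_less_one_iff)
  \<comment> \<open>Split \<open>r^(k+1) = \<rho>^(k+1) (r/\<rho>)^(k+1)\<close>; the squares of the second factors form a geometric series.\<close>
  define u where "u k = cmod (taylor_coeff f (Suc k)) * \<rho> ^ Suc k" for k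
  define v where "v k = (r / \<rho>) ^ Suc k" for k
  have uv: "u k * v k = cmod (taylor_coeff f (Suc k)) * r ^ Suc k" for k
    using \<rho> by (simp add: u_def v_def power_divide)
  have "(v k)^2 = t ^ Suc k" for k
    unfolding v_def t_def by (metis power_mult mult.commute)
  then have V: "(\<lambda>k. (v k)^2) sums (t / (1 - t))"
    using geometric_sums_Suc[OF t] by simp
  have "tail_majorant f r \<le> (l * (\<Sum>k. (u k)^2) + (\<Sum>k. (v k)^2) / l) / 2"
    unfolding tail_majorant_def uv[symmetric]
    by (rule suminf_mult_le_amgm)
      (use V l \<rho> r circle_integral_norm_sq(1)[OF holf, of \<rho>] in \<open>auto simp: u_def v_def sums_iff\<close>)
  then show ?thesis
    unfolding sums_unique[OF V, symmetric] by (simp add: tail_sq_sum_def u_def t_def)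
qed

lemma tail_majorant_le_A:
  assumes holf: "f holomorphic_on ball 0 1" and bnd: "\<forall>z\<in>ball 0 1. cmod (f z) \<le> 1"
  defines "a \<equiv> cmod (f 0)"
  assumes r: "0 < r" "r < a" and a1: "a < 1"
  shows "tail_majorant f r \<le> r * (1 - a^2) / (1 - a * r)"
proof -
  have a0: "0 < a" using r by simp
  have ar: "a * r < 1" using r a1 a0 by (smt (verit) mult_less_cancel_left2)
  have a2: "0 < 1 - a^2" using a0 a1 by (simp add: power_less_one_iff abs_square_less_1)
  \<comment> \<open>The radius \<open>\<rho>\<close> balances the two factors: \<open>a^2 \<rho>^2 = (r/\<rho>)^2 = a r\<close>.\<close>
  define \<rho> where "\<rho> = sqrt (r / a)"
  have "r^2 < r / a"
    using r a0 ar by (simp add: power2_eq_square field_simps)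
  then have \<rho>: "0 < \<rho>" "\<rho> < 1" "\<rho>^2 = r / a" "r < \<rho>"
    using r a0 by (auto simp: \<rho>_def real_less_rsqrt)
  have ar': "a^2 * \<rho>^2 = a * r" "(r / \<rho>)^2 = a * r"
    using a0 \<rho> by (simp_all add: power_divide power2_eq_square)
  have "tail_sq_sum f \<rho> * (1 - a^2 * \<rho>^2) \<le> \<rho>^2 * (1 - a^2)^2"
    using tail_sq_sum_schwarz[OF holf bnd _ less_imp_le[OF \<rho>(1)] \<rho>(2)] a1 by (simp only: a_def)
  from this[unfolded ar'(1), unfolded \<rho>(3)]
  have U: "tail_sq_sum f \<rho> \<le> r / a * (1 - a^2)^2 / (1 - a * r)"
    by (subst pos_le_divide_eq) (use ar in auto)
  define l where "l = a / (1 - a^2)"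
  have l: "0 < l" using a0 a2 by (simp add: l_def)
  have "tail_majorant f r \<le> (l * tail_sq_sum f \<rho> + a * r / (1 - a * r) / l) / 2"
    using tail_majorant_le_amgm[OF holf \<rho>(1,2) less_imp_le[OF r(1)] \<rho>(4) l] by (simp only: ar'(2))
  also have "\<dots> \<le> (l * (r / a * (1 - a^2)^2 / (1 - a * r)) + a * r / (1 - a * r) / l) / 2"
    using U l by (intro divide_right_mono add_right_mono mult_left_mono) auto
  also have "\<dots> = r * (1 - a^2) / (1 - a * r)"
  proof -
    have e: "a / D * (r / a * D^2 / E) = r * D / E" "a * r / E / (a / D) = r * D / E"
      if "D \<noteq> 0" "E \<noteq> 0" for D E :: real
      using that a0 by (simp_all add: field_simps power2_eq_square)
    have "1 - a^2 \<noteq> 0" "1 - a * r \<noteq> 0"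
      using a2 ar by auto
    from e[OF this] show ?thesis
      unfolding l_def add_divide_distrib by (simp only: field_sum_of_halves)
  qed
  finally show ?thesis .
qed

lemma tail_majorant_le_S:
  assumes holf: "f holomorphic_on ball 0 1" and bnd: "\<forall>z\<in>ball 0 1. cmod (f z) \<le> 1"
  defines "a \<equiv> cmod (f 0)"
  assumes a1: "a < 1" and r: "0 < r" "r < 1"
  shows "tail_majorant f r \<le> r * sqrt (1 - a^2) / sqrt (1 - r^2)"
proof -
  have a2: "a^2 < 1" using a1 by (simp add: a_def power_less_one_iff abs_square_less_1)
  have r2: "r^2 < 1" using r by (simp add: power_less_one_iff abs_square_less_1)
  note U = sq_taylor_coeff_sums_le[OF holf bnd, folded a_def]
  have "(r ^ Suc k)^2 = (r^2) ^ Suc k" for k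
    by (metis power_mult mult.commute)
  then have V: "(\<lambda>k. (r ^ Suc k)^2) sums (r^2 / (1 - r^2))"
    using geometric_sums_Suc[of "r^2"] r2 by simp
  define s1 where "s1 = sqrt (1 - a^2)"
  define s2 where "s2 = sqrt (1 - r^2)"
  have s1: "0 < s1" "s1^2 = 1 - a^2" using a2 by (auto simp: s1_def)
  have s2: "0 < s2" "s2^2 = 1 - r^2" using r2 by (auto simp: s2_def)
  define l where "l = r / (s2 * s1)"
  have l: "0 < l" using s1 s2 r by (simp add: l_def)
  have "tail_majorant f r \<le> (l * (\<Sum>k. (cmod (taylor_coeff f (Suc k)))^2) + (\<Sum>k. (r ^ Suc k)^2) / l) / 2"
    unfolding tail_majorant_def by (rule suminf_mult_le_amgm) (use U V l r in \<open>auto simp: sums_iff\<close>)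
  also have "\<dots> \<le> (l * (1 - a^2) + (\<Sum>k. (r ^ Suc k)^2) / l) / 2"
    using U l by (intro divide_right_mono add_right_mono mult_left_mono) auto
  also have "\<dots> = r * s1 / s2"
  proof -
    have "l * s1^2 = r * s1 / s2" "r^2 / s2^2 / l = r * s1 / s2"
      using s1 s2 r by (simp_all add: l_def field_simps power2_eq_square)
    then show ?thesis
      unfolding sums_unique[OF V, symmetric] s1(2)[symmetric] s2(2)[symmetric] add_divide_distrib
      by (simp only: field_sum_of_halves)
  qed
  finally show ?thesis by (simp add: s1_def s2_def)
qed

lemma tail_majorant_le_of_le_S:
  assumes holf: "f holomorphic_on ball 0 1" and bnd: "\<forall>z\<in>ball 0 1. cmod (f z) \<le> 1"
  defines "a \<equiv> cmod (f 0)"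
  assumes a1: "a < 1" and C: "0 < C" and m: "0 \<le> m" "m \<le> sqrt (C^2 / (1 - a^2 + C^2))"
  shows "m < 1" and "tail_majorant f m \<le> C"
proof -
  have a2: "a^2 < 1" using a1 by (simp add: a_def power_less_one_iff abs_square_less_1)
  have den: "0 < 1 - a^2 + C^2" using a2 C by (smt (verit) zero_le_power2)
  have "m^2 \<le> C^2 / (1 - a^2 + C^2)"
    using m den by (metis real_sqrt_pow2 power_mono divide_nonneg_pos zero_le_power2)
  then have mC: "m^2 * (1 - a^2) \<le> C^2 * (1 - m^2)"
    using den by (simp add: pos_le_divide_eq algebra_simps)
  then have "m^2 < 1"
    using a2 C by (smt (verit) mult_nonneg_nonneg zero_less_power2 mult_le_0_iff)
  then show m1: "m < 1" using m by (simp add: power_less_one_iff abs_square_less_1)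
  show "tail_majorant f m \<le> C"
  proof (cases "m = 0")
    case False
    have "tail_majorant f m \<le> m * sqrt (1 - a^2) / sqrt (1 - m^2)"
      unfolding a_def by (rule tail_majorant_le_S[OF holf bnd]) (use a1 m m1 False in \<open>auto simp: a_def\<close>)
    also have "\<dots> \<le> C"
    proof -
      have "sqrt (m^2 * (1 - a^2)) \<le> sqrt (C^2 * (1 - m^2))" using mC by simp
      then have "m * sqrt (1 - a^2) \<le> C * sqrt (1 - m^2)"
        using m C by (simp add: real_sqrt_mult)
      then show ?thesis using \<open>m^2 < 1\<close> by (simp add: pos_divide_le_eq)
    qed
    finally show ?thesis .
  qed (use C in simp)
qed

lemma tail_majorant_le_of_le_A:
  assumes holf: "f holomorphic_on ball 0 1" and bnd: "\<forall>z\<in>ball 0 1. cmod (f z) \<le> 1"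
  defines "a \<equiv> cmod (f 0)"
  assumes a1: "a < 1" and C: "0 < C" "C < a" and m: "0 \<le> m" "m \<le> C / (1 - a^2 + a * C)"
  shows "m < 1" and "tail_majorant f m \<le> C"
proof -
  have a2: "a^2 < 1" using a1 by (simp add: a_def power_less_one_iff abs_square_less_1)
  have den: "0 < 1 - a^2 + a * C" using a2 C by (smt (verit) mult_pos_pos)
  have mC: "m * (1 - a^2 + a * C) \<le> C" using m den by (simp add: pos_le_divide_eq)
  have ma: "m < a"
  proof (rule ccontr)
    assume "\<not> m < a"
    then have "a * (1 - a^2 + a * C) \<le> C" using mC den by (smt (verit) mult_right_mono)
    then have "a * (1 - a^2) \<le> C * (1 - a^2)" by (simp add: algebra_simps power2_eq_square)
    with a2 C show False by simp
  qed
  then show "m < 1" using a1 by simp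
  show "tail_majorant f m \<le> C"
  proof (cases "m = 0")
    case False
    have am: "a * m < 1" using a1 ma m by (smt (verit) mult_less_cancel_left2)
    have "tail_majorant f m \<le> m * (1 - a^2) / (1 - a * m)"
      unfolding a_def by (rule tail_majorant_le_A[OF holf bnd]) (use a1 m ma False in \<open>auto simp: a_def\<close>)
    also have "\<dots> \<le> C"
      using mC am by (simp add: pos_divide_le_eq algebra_simps)
    finally show ?thesis .
  qed (use C in simp)
qed

lemma ahat_root:
  fixes p q :: real
  assumes "0 < p" "0 < q"
  shows "0 < ahat p q" "ahat p q < 1" "ahat p q powr p + ahat p q powr q = 1"
proof -
  have mono: "x powr p + x powr q < y powr p + y powr q" if "0 \<le> x" "x < y" for x y :: real
    using powr_less_mono2[OF assms(1) that] powr_less_mono2[OF assms(2) that] by simp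
  have "continuous_on {0..1} (\<lambda>x::real. x powr p + x powr q)"
    using assms by (intro continuous_intros continuous_on_powr') auto
  then obtain x where x: "0 \<le> x" "x \<le> 1" "x powr p + x powr q = 1"
    using IVT'[of "\<lambda>x::real. x powr p + x powr q" 0 1 1] by auto
  then have "0 < x \<and> x < 1 \<and> x powr p + x powr q = 1"
    by (cases "x = 0 \<or> x = 1") (auto simp: less_le)
  moreover have "y = x" if "0 < y \<and> y < 1 \<and> y powr p + y powr q = 1" for y
    using mono[of x y] mono[of y x] x that by (cases x y rule: linorder_cases) auto
  ultimately have "\<exists>!x. 0 < x \<and> x < 1 \<and> x powr p + x powr q = 1"
    by blast
  from theI'[OF this] show "0 < ahat p q" "ahat p q < 1" "ahat p q powr p + ahat p q powr q = 1"
    unfolding ahat_def by auto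
qed

lemma powr_inverse_lt_of_ahat_lt:
  fixes p q a :: real
  assumes p: "0 < p" and q: "0 < q" and a: "ahat p q < a" "a < 1"
  shows "(1 - a powr p) powr (1 / q) < a"
proof -
  have "ahat p q powr p + ahat p q powr q < a powr p + a powr q"
    using ahat_root(1)[OF p q] a powr_less_mono2[OF p _ a(1)] powr_less_mono2[OF q _ a(1)] by simp
  then have "1 - a powr p < a powr q"
    using ahat_root(3)[OF p q] by simp
  moreover have "0 \<le> 1 - a powr p"
    using a ahat_root(1)[OF p q] p by (simp add: powr_le1)
  ultimately have "(1 - a powr p) powr (1 / q) < (a powr q) powr (1 / q)"
    using q by (intro powr_less_mono2) auto
  also have "\<dots> = a"
    using a ahat_root(1)[OF p q] q by (simp add: powr_powr)
  finally show ?thesis .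
qed

lemma Rpq_okI:
  assumes q: "0 < q" and holf: "f holomorphic_on ball 0 1" and r: "0 \<le> r" "r < 1"
    and f0: "cmod (f 0) powr p \<le> 1"
    and le: "tail_majorant f r \<le> (1 - cmod (f 0) powr p) powr (1 / q)"
  shows "Rpq_ok p q f r"
proof -
  note sm = summable_tail_majorant[OF holf r]
  from tail_majorant_nonneg[OF sm r(1)]
  have "tail_majorant f r powr q \<le> ((1 - cmod (f 0) powr p) powr (1 / q)) powr q"
    using q le by (intro powr_mono2) auto
  also have "\<dots> = 1 - cmod (f 0) powr p"
    using q f0 by (simp add: powr_powr)
  finally show ?thesis
    using r sm by (simp add: Rpq_ok_def tail_majorant_def)
qed

lemma Rpq_ok_if_norm_eq_1:
  assumes holf: "f holomorphic_on ball 0 1" and bnd: "\<forall>z\<in>ball 0 1. cmod (f z) \<le> 1"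
    and f0: "cmod (f 0) = 1" and r: "0 \<le> r"
  shows "Rpq_ok p q f r"
  unfolding Rpq_ok_def using taylor_coeff_Suc_eq_0_if_norm_eq_1[OF holf bnd f0] f0 r by simp

lemma Rpq_ok_below_S_and_A:
  fixes p q m :: real
  assumes p: "0 < p" and q: "0 < q"
    and holf: "f holomorphic_on ball 0 1" and bnd: "\<forall>z\<in>ball 0 1. cmod (f z) \<le> 1"
    and m: "0 \<le> m"
    and mS: "\<And>a. a \<in> {0..ahat p q} \<Longrightarrow> m \<le> S_pq p q a"
    and mA: "\<And>a. a \<in> {ahat p q..<1} \<Longrightarrow> m \<le> A_pq p q a"
  shows "Rpq_ok p q f m"
proof -
  define a where "a = cmod (f 0)"
  have a1: "a \<le> 1" using bnd by (simp add: a_def)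
  show ?thesis
  proof (cases "a = 1")
    case True
    then show ?thesis using Rpq_ok_if_norm_eq_1[OF holf bnd _ m] by (simp add: a_def)
  next
    case False
    then have a1: "a < 1" using a1 by simp
    have ap: "a powr p < 1" using powr_less_mono2[OF p, of a 1] a1 by (simp add: a_def)
    define C where "C = (1 - a powr p) powr (1 / q)"
    have C: "0 < C" using ap by (simp add: C_def)
    have C2: "(1 - a powr p) powr (2 / q) = C^2"
      using ap by (simp add: C_def powr_powr flip: powr_realpow)
    have "m < 1 \<and> tail_majorant f m \<le> C"
    proof (cases "a \<le> ahat p q")
      case True
      have "m \<le> sqrt (C^2 / (1 - a^2 + C^2))"
        using mS[of a] True C2 by (simp add: a_def S_pq_def)
      from tail_majorant_le_of_le_S[OF holf bnd a1[unfolded a_def] C m this[unfolded a_def]]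
      show ?thesis by simp
    next
      case False
      have Ca: "C < a"
        unfolding C_def using powr_inverse_lt_of_ahat_lt[OF p q _ a1] False by simp
      have "m \<le> C / (1 - a^2 + a * C)"
        using mA[of a] False a1 by (simp add: A_pq_def C_def)
      from tail_majorant_le_of_le_A[OF holf bnd a1[unfolded a_def] C Ca[unfolded a_def] m
          this[unfolded a_def]]
      show ?thesis by simp
    qed
    then show ?thesis
      using Rpq_okI[OF q holf m] ap by (simp add: a_def C_def)
  qed
qed

lemma summable_tail_majorant_smaller:
  assumes sm: "summable (\<lambda>k. cmod (taylor_coeff f (Suc k)) * r ^ Suc k)" and r: "0 \<le> r0" "r0 \<le> r"
  shows "summable (\<lambda>k. cmod (taylor_coeff f (Suc k)) * r0 ^ Suc k)"
proof -
  have "cmod (taylor_coeff f (Suc k)) * r0 ^ Suc k \<le> cmod (taylor_coeff f (Suc k)) * r ^ Suc k" for k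
    using r by (intro mult_left_mono power_mono) auto
  then show ?thesis
    using r by (intro summable_comparison_test[OF _ sm]) auto
qed

lemma tail_majorant_strict_mono:
  assumes c1: "taylor_coeff f 1 \<noteq> 0" and r: "0 \<le> r0" "r0 < r"
    and sm: "summable (\<lambda>k. cmod (taylor_coeff f (Suc k)) * r ^ Suc k)"
  shows "tail_majorant f r0 < tail_majorant f r"
proof -
  define \<beta> where "\<beta> k = cmod (taylor_coeff f (Suc k))" for k
  note sm0 = summable_tail_majorant_smaller[OF sm r(1) less_imp_le[OF r(2)], folded \<beta>_def]
  have "0 < (\<Sum>k. \<beta> k * r ^ Suc k - \<beta> k * r0 ^ Suc k)"
  proof (rule suminf_pos2[where i = 0])
    show "summable (\<lambda>k. \<beta> k * r ^ Suc k - \<beta> k * r0 ^ Suc k)"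
      using sm sm0 by (intro summable_diff) (auto simp: \<beta>_def)
    have "\<beta> k * r0 ^ Suc k \<le> \<beta> k * r ^ Suc k" for k
      using r by (intro mult_left_mono power_mono) (auto simp: \<beta>_def)
    then show "0 \<le> \<beta> k * r ^ Suc k - \<beta> k * r0 ^ Suc k" for k
      by simp
    show "0 < \<beta> 0 * r ^ Suc 0 - \<beta> 0 * r0 ^ Suc 0"
      using c1 r by (simp add: \<beta>_def)
  qed
  then show ?thesis
    using suminf_diff[OF sm[folded \<beta>_def] sm0] by (simp add: tail_majorant_def \<beta>_def)
qed

lemma Rpq_ok_le_of_extremal:
  assumes q: "0 < q" and c1: "taylor_coeff f 1 \<noteq> 0" and r0: "0 \<le> r0"
    and extremal: "1 \<le> cmod (f 0) powr p + tail_majorant f r0 powr q"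
    and ok: "Rpq_ok p q f r"
  shows "r \<le> r0"
proof (rule ccontr)
  assume "\<not> r \<le> r0"
  then have r: "r0 < r" by simp
  have sm: "summable (\<lambda>k. cmod (taylor_coeff f (Suc k)) * r ^ Suc k)"
    and le: "cmod (f 0) powr p + tail_majorant f r powr q \<le> 1"
    using ok by (simp_all add: Rpq_ok_def tail_majorant_def)
  have "0 \<le> tail_majorant f r0"
    using summable_tail_majorant_smaller[OF sm r0 less_imp_le[OF r]] r0 by (rule tail_majorant_nonneg)
  then have "tail_majorant f r0 powr q < tail_majorant f r powr q"
    using tail_majorant_strict_mono[OF c1 r0 r sm] q by (intro powr_less_mono2) auto
  with extremal le show False by simp
qed

lemma Moebius_function_real_sums:
  assumes a: "0 \<le> a" "a < 1" and z: "norm z < 1"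
  shows "(\<lambda>k. (if k = 0 then - of_real a else of_real ((1 - a^2) * a ^ (k - 1))) * z ^ k)
           sums Moebius_function 0 (of_real a) z"
proof -
  define w where "w = complex_of_real a * z"
  have "a * norm z < 1" using a z by (smt (verit) mult_left_le_one_le norm_ge_zero)
  then have w: "norm w < 1" using a by (simp add: w_def norm_mult)
  \<comment> \<open>\<open>(z - a) / (1 - a z) = -a + (1 - a^2) z / (1 - a z)\<close>, expanded as a geometric series in \<open>a z\<close>\<close>
  have "(\<lambda>k. (of_real (1 - a^2) * z) * w ^ k) sums ((of_real (1 - a^2) * z) * (1 / (1 - w)))"
    by (intro sums_mult geometric_sums w)
  then have "(\<lambda>k. of_real ((1 - a^2) * a ^ k) * z ^ Suc k) sums (of_real (1 - a^2) * z / (1 - w))"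
    by (simp add: w_def power_mult_distrib mult_ac)
  then have "(\<lambda>k. (if k = 0 then - of_real a else of_real ((1 - a^2) * a ^ (k - 1))) * z ^ k)
      sums (of_real (1 - a^2) * z / (1 - w) + (- of_real a))"
    using sums_Suc_iff[of "\<lambda>k. (if k = 0 then - of_real a else of_real ((1 - a^2) * a ^ (k - 1))) * z ^ k"]
    by simp
  moreover have "of_real (1 - a^2) * z / (1 - w) + (- of_real a) = Moebius_function 0 (of_real a) z"
  proof -
    have "1 - w \<noteq> 0" using w by auto
    then show ?thesis
      by (simp add: Moebius_function_def w_def field_simps power2_eq_square)
  qed
  ultimately show ?thesis by simp
qed

lemma taylor_coeff_Moebius_function_real:
  assumes "0 \<le> a" "a < 1"
  shows "taylor_coeff (Moebius_function 0 (of_real a)) k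
           = (if k = 0 then - of_real a else of_real ((1 - a^2) * a ^ (k - 1)))"
  by (rule taylor_coeff_unique) (rule Moebius_function_real_sums[OF assms])

lemma tail_majorant_Moebius_function_real:
  assumes a: "0 \<le> a" "a < 1" and r: "0 \<le> r" "a * r < 1"
  shows "summable (\<lambda>k. cmod (taylor_coeff (Moebius_function 0 (of_real a)) (Suc k)) * r ^ Suc k)"
    and "tail_majorant (Moebius_function 0 (of_real a)) r = (1 - a^2) * r / (1 - a * r)"
proof -
  have "cmod (taylor_coeff (Moebius_function 0 (of_real a)) (Suc k)) = \<bar>(1 - a^2) * a ^ k\<bar>" for k
  proof -
    have "taylor_coeff (Moebius_function 0 (of_real a)) (Suc k) = of_real ((1 - a^2) * a ^ k)"
      using taylor_coeff_Moebius_function_real[OF a, of "Suc k"] by simp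
    then show ?thesis
      by (simp only: norm_of_real)
  qed
  moreover have "1 - a^2 \<ge> 0" using a by (simp add: power_le_one)
  ultimately have eq: "(\<lambda>k. cmod (taylor_coeff (Moebius_function 0 (of_real a)) (Suc k)) * r ^ Suc k)
      = (\<lambda>k. ((1 - a^2) * r) * (a * r) ^ k)"
    using a by (simp add: abs_mult power_mult_distrib mult_ac)
  have "(\<lambda>k. ((1 - a^2) * r) * (a * r) ^ k) sums ((1 - a^2) * r * (1 / (1 - a * r)))"
    using a r by (intro sums_mult geometric_sums) (simp add: mult_nonneg_nonneg)
  then show "summable (\<lambda>k. cmod (taylor_coeff (Moebius_function 0 (of_real a)) (Suc k)) * r ^ Suc k)"
    and "tail_majorant (Moebius_function 0 (of_real a)) r = (1 - a^2) * r / (1 - a * r)"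
    unfolding tail_majorant_def eq by (simp_all add: sums_iff)
qed

lemma tail_majorant_mult_id:
  assumes holg: "g holomorphic_on ball 0 1" and r: "0 \<le> r" "r < 1"
  shows "tail_majorant (\<lambda>z. z * g z) r = r * (cmod (g 0) + tail_majorant g r)"
proof -
  have "(\<lambda>k. cmod (taylor_coeff g k) * r ^ k) sums (tail_majorant g r + cmod (g 0))"
    using summable_tail_majorant[OF holg r]
      sums_Suc_iff[of "\<lambda>k. cmod (taylor_coeff g k) * r ^ k" "tail_majorant g r"]
    by (simp add: tail_majorant_def summable_sums)
  from sums_mult[OF this, of r] show ?thesis
    by (simp add: tail_majorant_def taylor_coeff_mult_id[OF holg] sums_iff mult_ac)
qed

lemma Rpq_ok_Moebius_function_le_A:
  fixes p q a :: real
  assumes p: "0 < p" and q: "0 < q" and a: "0 \<le> a" "a < 1"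
    and ok: "Rpq_ok p q (Moebius_function 0 (of_real a)) r"
  shows "r \<le> A_pq p q a"
proof (rule Rpq_ok_le_of_extremal[OF q _ _ _ ok])
  define C where "C = (1 - a powr p) powr (1 / q)"
  have ap: "a powr p < 1" using powr_less_mono2[OF p, of a 1] a by simp
  have a2: "a^2 < 1" using a by (simp add: power_less_one_iff abs_square_less_1)
  have C: "0 < C" using ap by (simp add: C_def)
  have D: "0 < 1 - a^2 + a * C" using a a2 C by (smt (verit) mult_nonneg_nonneg)
  have A: "A_pq p q a = C / (1 - a^2 + a * C)"
    by (simp add: A_pq_def C_def)
  show "0 \<le> A_pq p q a"
    using C D by (simp add: A)
  have aA: "a * A_pq p q a < 1"
    using D a2 by (simp add: A field_simps)
  show "taylor_coeff (Moebius_function 0 (of_real a)) 1 \<noteq> 0"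
    using taylor_coeff_Moebius_function_real[OF a, of 1] a2 by (simp flip: of_real_power)
  have "tail_majorant (Moebius_function 0 (of_real a)) (A_pq p q a) = C"
  proof -
    have "1 - a * A_pq p q a = (1 - a^2) / (1 - a^2 + a * C)"
      using D by (simp add: A field_simps)
    moreover have "X * (C / Y) / (X / Y) = C" if "X \<noteq> 0" "Y \<noteq> 0" for X Y :: real
      using that by (simp add: field_simps)
    ultimately show ?thesis
      using tail_majorant_Moebius_function_real(2)[OF a \<open>0 \<le> A_pq p q a\<close> aA] D a2 by (simp add: A)
  qed
  then show "1 \<le> cmod (Moebius_function 0 (of_real a) 0) powr p
      + tail_majorant (Moebius_function 0 (of_real a)) (A_pq p q a) powr q"
    using a ap q by (simp add: Moebius_function_of_zero C_def powr_powr)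
qed

lemma Rpq_ok_z_Moebius_function_le:
  fixes p q :: real
  assumes q: "0 < q" and ok: "Rpq_ok p q (\<lambda>z. z * Moebius_function 0 (of_real (1 / sqrt 2)) z) r"
  shows "r \<le> 1 / sqrt 2"
proof (rule Rpq_ok_le_of_extremal[OF q _ _ _ ok])
  define s :: real where "s = 1 / sqrt 2"
  have s: "0 < s" "s < 1" "s^2 = 1/2" by (auto simp: s_def power_divide)
  have hol: "Moebius_function 0 (of_real s) holomorphic_on ball 0 1"
    using s by (intro Moebius_function_holomorphic) simp
  show "taylor_coeff (\<lambda>z. z * Moebius_function 0 (of_real (1 / sqrt 2)) z) 1 \<noteq> 0"
    using taylor_coeff_mult_id[OF hol, of 0] taylor_coeff_Moebius_function_real[of s 0] s
    by (simp add: s_def)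
  show "0 \<le> 1 / sqrt (2::real)" by simp
  have "s * s < 1" using s by (simp add: power2_eq_square)
  note tM = tail_majorant_Moebius_function_real(2)
    [OF less_imp_le[OF s(1)] s(2) less_imp_le[OF s(1)] this]
  have "tail_majorant (\<lambda>z. z * Moebius_function 0 (of_real s) z) s
      = s * (s + tail_majorant (Moebius_function 0 (of_real s)) s)"
    using tail_majorant_mult_id[OF hol, of s] s by (simp add: Moebius_function_of_zero)
  also have "\<dots> = s * (s + (1 - s^2) * s / (1 - s * s))"
    by (simp only: tM)
  also have "\<dots> = 1"
    using s by (simp add: power2_eq_square)
  finally show "1 \<le> cmod (0 * Moebius_function 0 (of_real (1 / sqrt 2)) 0) powr p
      + tail_majorant (\<lambda>z. z * Moebius_function 0 (of_real (1 / sqrt 2)) z) (1 / sqrt 2) powr q"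
    by (simp add: s_def)
qed

lemma S_pq_nonneg:
  assumes "a^2 < 1"
  shows "0 \<le> S_pq p q a"
proof -
  have "0 < 1 - a^2 + (1 - a powr p) powr (2 / q)"
    using assms by (smt (verit) powr_ge_zero)
  then show ?thesis by (simp add: S_pq_def)
qed

lemma A_pq_nonneg:
  assumes "0 \<le> a" "a < 1"
  shows "0 \<le> A_pq p q a"
proof -
  have "a^2 < 1" using assms by (simp add: power_less_one_iff abs_square_less_1)
  then have "0 < 1 - a^2 + a * (1 - a powr p) powr (1 / q)"
    using assms by (smt (verit) powr_ge_zero mult_nonneg_nonneg)
  then show ?thesis by (simp add: A_pq_def)
qed

lemma ereal_le_INF_real:
  fixes g :: "'a \<Rightarrow> real" and x :: ereal
  assumes "D \<noteq> {}" and "\<And>a. a \<in> D \<Longrightarrow> x \<le> ereal (g a)"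
  shows "x \<le> ereal (INF a\<in>D. g a)"
proof (cases x)
  case (real y)
  then have "y \<le> (INF a\<in>D. g a)"
    using assms by (intro cINF_greatest) auto
  then show ?thesis using real by simp
qed (use assms in auto)

lemma Rpq_C_ge:
  assumes "\<And>f. f holomorphic_on ball 0 1 \<Longrightarrow> \<forall>z\<in>ball 0 1. cmod (f z) \<le> 1 \<Longrightarrow> Rpq_ok p q f m"
  shows "ereal m \<le> Rpq_C p q"
  unfolding Rpq_C_def Rpq_f_def using assms by (intro INF_greatest SUP_upper) auto

lemma Rpq_C_le:
  assumes "f holomorphic_on ball 0 1" "\<forall>z\<in>ball 0 1. cmod (f z) \<le> 1"
    and "\<And>r. Rpq_ok p q f r \<Longrightarrow> r \<le> b"
  shows "Rpq_C p q \<le> ereal b"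
proof -
  have "Rpq_C p q \<le> Rpq_f p q f"
    unfolding Rpq_C_def using assms(1,2) by (intro INF_lower) auto
  also have "\<dots> \<le> ereal b"
    unfolding Rpq_f_def using assms(3) by (intro SUP_least) auto
  finally show ?thesis .
qed

lemma Moebius_function_real_admissible:
  assumes "0 \<le> a" "a < 1"
  shows "Moebius_function 0 (of_real a) holomorphic_on ball 0 1"
    and "\<forall>z\<in>ball 0 1. cmod (Moebius_function 0 (of_real a) z) \<le> 1"
  using assms by (auto intro!: Moebius_function_holomorphic less_imp_le[OF Moebius_function_norm_lt_1])

lemma Rpq_C_le_A_pq:
  assumes "0 < p" "0 < q" "0 \<le> a" "a < 1"
  shows "Rpq_C p q \<le> ereal (A_pq p q a)"
  using assms Moebius_function_real_admissible[of a]
  by (intro Rpq_C_le[OF _ _ Rpq_ok_Moebius_function_le_A]) auto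

lemma Rpq_C_le_inverse_sqrt_2:
  assumes "0 < q"
  shows "Rpq_C p q \<le> ereal (1 / sqrt 2)"
proof (rule Rpq_C_le[OF _ _ Rpq_ok_z_Moebius_function_le[OF assms]])
  have "0 \<le> 1 / sqrt (2::real)" "1 / sqrt (2::real) < 1" by auto
  note M = Moebius_function_real_admissible[OF this]
  show "(\<lambda>z. z * Moebius_function 0 (of_real (1 / sqrt 2)) z) holomorphic_on ball 0 1"
    by (intro holomorphic_intros M(1))
  show "\<forall>z\<in>ball 0 1. cmod (z * Moebius_function 0 (of_real (1 / sqrt 2)) z) \<le> 1"
    using M(2) by (simp add: norm_mult mult_le_one)
qed

theorem mainTheorem2:
  fixes p q :: real
  assumes "1 \<le> p" and "1 \<le> q"
  shows "min (ereal (INF a\<in>{0..ahat p q}. S_pq p q a)) (ereal (INF a\<in>{ahat p q..<1}. A_pq p q a))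
           \<le> Rpq_C p q
       \<and> Rpq_C p q \<le> ereal (min (1 / sqrt 2) (INF a\<in>{ahat p q..<1}. A_pq p q a))"
proof -
  have p: "0 < p" and q: "0 < q" using assms by auto
  define X where "X = (INF a\<in>{0..ahat p q}. S_pq p q a)"
  define Z where "Z = (INF a\<in>{ahat p q..<1}. A_pq p q a)"
  have ahat: "0 < ahat p q" "ahat p q < 1" using ahat_root[OF p q] by auto
  have S: "0 \<le> S_pq p q a" if "a \<in> {0..ahat p q}" for a
    using that ahat by (intro S_pq_nonneg) (simp add: power_less_one_iff abs_square_less_1)
  have A: "0 \<le> A_pq p q a" if "a \<in> {ahat p q..<1}" for a
    using that ahat by (intro A_pq_nonneg) auto
  have "0 \<le> X" "0 \<le> Z"
    unfolding X_def Z_def using S A ahat by (intro cINF_greatest; force)+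
  moreover have "X \<le> S_pq p q a" if "a \<in> {0..ahat p q}" for a
    unfolding X_def using that S by (intro cINF_lower bdd_belowI2[where m = 0])
  moreover have "Z \<le> A_pq p q a" if "a \<in> {ahat p q..<1}" for a
    unfolding Z_def using that A by (intro cINF_lower bdd_belowI2[where m = 0])
  ultimately have "ereal (min X Z) \<le> Rpq_C p q"
    by (intro Rpq_C_ge Rpq_ok_below_S_and_A[OF p q]) (auto simp: min_le_iff_disj)
  moreover have "Rpq_C p q \<le> ereal Z"
    unfolding Z_def using ahat by (intro ereal_le_INF_real Rpq_C_le_A_pq[OF p q]) auto
  ultimately show ?thesis
    using Rpq_C_le_inverse_sqrt_2[OF q] unfolding X_def[symmetric] Z_def[symmetric] by simp
qed

end
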